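(* Let $Y=T\times_H\mathfrak h^\circ\times\mathbb C^{h+1}$ be a tall local model with moment map $\Phi_Y$ and let $N$ be the degree of its defining polynomial $P(z)=\prod_jz_j^{\xi_j}$. Then for all $[t,\alpha,z]\in\Phi_Y^{-1}(0)$, $$|z|^2=N\Big(\prod_j\xi_j^{\xi_j}\Big)^{-1/N}|P(z)|^{2/N},$$ with the convention $0^0=1$.
   Context: $T$ is a torus with Lie algebra $\mathfrak t$, $H\subseteq T$ a closed subgroup of dimension $h$ with Lie algebra $\mathfrak h$, $\rho\colon H\to(S^1)^{h+1}$ an injective homomorphism, $\eta_i\in\mathfrak h^*$ the differential of the $i$-th component of $\rho$. A fixed inner product on $\mathfrak t$ identifies $\mathfrak t^*\cong\mathfrak h^\circ\oplus\mathfrak h^*$. The local model $Y=T\times_H\mathfrak h^\circ\times\mathbb C^{h+1}$ ($H$ acting on $T$ by multiplication, trivially on $\mathfrak h^\circ$, on $\mathbb C^{h+1}$ by $h\cdot z=\rho(h^{-1})z$) has $T$-action $s\cdot[t,\alpha,z]=[st,\alpha,z]$ and moment map $\Phi_Y([t,\alpha,z])=\alpha+\frac12\sum_i\eta_i|z_i|^2$. $Y$ is tall if $\Phi_Y^{-1}(0)$ contains more than one $T$-orbit; then there is a unique $\xi\in\mathbb Z_{\ge0}^{h+1}$ with $\lambda\mapsto\prod_j\lambda_j^{\xi_j}$ giving a short exact sequence $1\to H\xrightarrow{\rho}(S^1)^{h+1}\to S^1\to1$; the defining polynomial is $P(z)=\prod_jz_j^{\xi_j}$ and its degree is $N=\sum_j\xi_j$.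 *)

theory Defs
  imports "HOL-Analysis.Analysis"
begin

text \<open>The torus T of dimension n is the compact group
  (S^1)^n, realised as unit-modulus vectors in complex^'n with componentwise
  multiplication; its Lie algebra is real^'n with exponential map
  X \<mapsto> (exp(2 pi i X_k))_k. Elements of the dual t^* are represented by
  vectors in real^'n via the standard (coordinate) pairing.\<close>

definition torus :: "(complex^'n) set" where
  "torus = {t. \<forall>k. cmod (t$k) = 1}"

definition vmul :: "complex^'n \<Rightarrow> complex^'n \<Rightarrow> complex^'n" where
  "vmul a b = (\<chi> k. a$k * b$k)"

definition vinv :: "complex^'n \<Rightarrow> complex^'n" where
  "vinv a = (\<chi> k. inverse (a$k))"

definition vone :: "complex^'n" where
  "vone = (\<chi> k. 1)"

definition texp :: "real^'n \<Rightarrow> complex^'n" where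
  "texp X = (\<chi> k. cis (2 * pi * X$k))"

definition closed_subgroup :: "(complex^'n) set \<Rightarrow> bool" where
  "closed_subgroup H \<longleftrightarrow> H \<subseteq> torus \<and> closed H \<and> vone \<in> H \<and>
     (\<forall>a\<in>H. \<forall>b\<in>H. vmul a b \<in> H) \<and> (\<forall>a\<in>H. vinv a \<in> H)"

definition lie_alg :: "(complex^'n) set \<Rightarrow> (real^'n) set" where
  "lie_alg H = {X. \<forall>s::real. texp (s *\<^sub>R X) \<in> H}"

definition annih :: "(complex^'n) set \<Rightarrow> (real^'n) set" where
  "annih H = {\<alpha>. \<forall>X\<in>lie_alg H. \<alpha> \<bullet> X = 0}"

text \<open>Injective Lie group homomorphism rho : H \<rightarrow> (S^1)^m (continuity suffices,
  continuous homomorphisms of Lie groups being smooth).\<close>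
definition inj_hom :: "(complex^'n) set \<Rightarrow> (complex^'n \<Rightarrow> complex^'m) \<Rightarrow> bool" where
  "inj_hom H \<rho> \<longleftrightarrow> \<rho> ` H \<subseteq> torus \<and> inj_on \<rho> H \<and> continuous_on H \<rho> \<and>
     (\<forall>a\<in>H. \<forall>b\<in>H. \<rho> (vmul a b) = vmul (\<rho> a) (\<rho> b))"

text \<open>eta_j in h^*: the differential of the j-th component of rho, i.e. for X in h,
  rho_j(exp(sX)) = exp(2 pi i s eta_j(X)).\<close>
definition eta :: "(complex^'n \<Rightarrow> complex^'m) \<Rightarrow> 'm \<Rightarrow> real^'n \<Rightarrow> real" where
  "eta \<rho> j X = (THE c. \<forall>s::real. \<rho> (texp (s *\<^sub>R X)) $ j = cis (2 * pi * c * s))"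

text \<open>Moment map of Y = T \<times>_H h^o \<times> C^m at a representative (t, alpha, z), with
  values in t^* = h^o (+) h^*: the h^o-component alpha and the h^*-component
  (1/2) sum_j eta_j |z_j|^2 (as a function on h).\<close>
definition moment_map :: "(complex^'n) set \<Rightarrow> (complex^'n \<Rightarrow> complex^'m) \<Rightarrow>
    (complex^'n) \<times> (real^'n) \<times> (complex^'m) \<Rightarrow> (real^'n) \<times> (real^'n \<Rightarrow> real)" where
  "moment_map H \<rho> p = (case p of (t, \<alpha>, z) \<Rightarrow>
     (\<alpha>, \<lambda>X. if X \<in> lie_alg H then (1/2) * (\<Sum>j\<in>UNIV. eta \<rho> j X * (cmod (z$j))\<^sup>2) else 0))"

text \<open>Representatives of points of Y: t in T, alpha in h^o, z in C^m.\<close>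
definition model_pts :: "(complex^'n) set \<Rightarrow> ((complex^'n) \<times> (real^'n) \<times> (complex^'m)) set" where
  "model_pts H = torus \<times> annih H \<times> UNIV"

definition zero_level :: "(complex^'n) set \<Rightarrow> (complex^'n \<Rightarrow> complex^'m) \<Rightarrow>
    ((complex^'n) \<times> (real^'n) \<times> (complex^'m)) set" where
  "zero_level H \<rho> = {p \<in> model_pts H. moment_map H \<rho> p = (0, \<lambda>X. 0)}"

text \<open>[t,alpha,z] = [g t, alpha, rho(g^-1) z] for g in H; two representatives lie
  in the same T-orbit of Y iff [t',alpha',z'] = [s t, alpha, z] for some s in T.\<close>
definition same_T_orbit :: "(complex^'n) set \<Rightarrow> (complex^'n \<Rightarrow> complex^'m) \<Rightarrow>
    (complex^'n) \<times> (real^'n) \<times> (complex^'m) \<Rightarrow> (complex^'n) \<times> (real^'n) \<times> (complex^'m) \<Rightarrow> bool" where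
  "same_T_orbit H \<rho> p q = (case p of (t, \<alpha>, z) \<Rightarrow> case q of (t', \<alpha>', z') \<Rightarrow>
     (\<exists>s\<in>torus. \<exists>g\<in>H. t' = vmul g (vmul s t) \<and> \<alpha>' = \<alpha> \<and> z' = vmul (\<rho> (vinv g)) z))"

definition tall :: "(complex^'n) set \<Rightarrow> (complex^'n \<Rightarrow> complex^'m) \<Rightarrow> bool" where
  "tall H \<rho> \<longleftrightarrow> (\<exists>p\<in>zero_level H \<rho>. \<exists>q\<in>zero_level H \<rho>. \<not> same_T_orbit H \<rho> p q)"

text \<open>xi gives a short exact sequence 1 \<rightarrow> H \<rightarrow> (S^1)^m \<rightarrow> S^1 \<rightarrow> 1
  (injectivity of rho is part of inj_hom).\<close>
definition exact_seq :: "(complex^'n) set \<Rightarrow> (complex^'n \<Rightarrow> complex^'m) \<Rightarrow> ('m \<Rightarrow> nat) \<Rightarrow> bool" where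
  "exact_seq H \<rho> \<xi> \<longleftrightarrow>
     \<rho> ` H = {l\<in>torus. (\<Prod>j\<in>UNIV. (l$j) ^ \<xi> j) = 1} \<and>
     (\<forall>w. cmod w = 1 \<longrightarrow> (\<exists>l\<in>torus. (\<Prod>j\<in>UNIV. (l$j) ^ \<xi> j) = w))"

definition defining_poly :: "('m::finite \<Rightarrow> nat) \<Rightarrow> complex^'m \<Rightarrow> complex" where
  "defining_poly \<xi> z = (\<Prod>j\<in>UNIV. (z$j) ^ \<xi> j)"

definition poly_degree :: "('m::finite \<Rightarrow> nat) \<Rightarrow> nat" where
  "poly_degree \<xi> = (\<Sum>j\<in>UNIV. \<xi> j)"

end

theory Submission
  imports Defs
begin

text \<open>On the zero level, \<open>\<Sum>\<^sub>j \<eta>\<^sub>j(X) |z\<^sub>j|\<^sup>2 = 0\<close> for every \<open>X\<close> in the Lie algebra of \<open>H\<close>.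
  By exactness the vectors \<open>(\<eta>\<^sub>j(X))\<^sub>j\<close> exhaust the hyperplane orthogonal to \<open>\<xi>\<close>: for such \<open>v\<close>
  the one-parameter subgroup \<open>s \<mapsto> exp(2\<pi>isv)\<close> of the torus lies in \<open>\<rho>(H)\<close>, and its pull-back
  to the compact group \<open>H\<close> is a continuous one-parameter subgroup of \<open>T\<close>, hence of the form
  \<open>exp(sX)\<close>. So \<open>(|z\<^sub>j|\<^sup>2)\<^sub>j = c\<xi>\<close> for some \<open>c \<ge> 0\<close>; then \<open>|z|\<^sup>2 = cN\<close> and
  \<open>|P(z)|\<^sup>2 = c\<^sup>N \<Prod>\<^sub>j \<xi>\<^sub>j\<^sup>\<xi>\<^sup>\<^sub>j\<close>, which is the claim.\<close>

lemma cis_frequency_unique: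
  assumes "\<forall>s::real. cis (2 * pi * c * s) = cis (2 * pi * d * s)"
  shows "c = d"
proof (rule ccontr)
  assume "c \<noteq> d"
  define s where "s = 1 / (2 * (c - d))"
  have "2 * (c - d) * s = 1"
    using \<open>c \<noteq> d\<close> by (simp add: s_def)
  have "2 * pi * c * s - 2 * pi * d * s = pi * (2 * (c - d) * s)"
    by (simp add: algebra_simps)
  with \<open>2 * (c - d) * s = 1\<close> have "2 * pi * c * s - 2 * pi * d * s = pi"
    by simp
  then have "cis pi = cis (2 * pi * c * s) / cis (2 * pi * d * s)"
    by (simp add: cis_divide)
  also have "\<dots> = 1"
    using assms by simp
  finally show False
    by simp
qed

lemma exp_eq_1_imp_norm_ge:
  assumes "exp (w::complex) = 1" "w \<noteq> 0"
  shows "2 * pi \<le> norm w"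
proof -
  obtain n :: int where "Re w = 0" "Im w = of_int (2 * n) * pi"
    using assms(1) exp_eq_1 by blast
  moreover have "n \<noteq> 0"
    using assms(2) calculation by (simp add: complex_eq_iff)
  ultimately have "norm w = 2 * \<bar>real_of_int n\<bar> * pi"
    by (simp add: cmod_def abs_mult)
  also have "\<dots> \<ge> 2 * 1 * pi"
    using \<open>n \<noteq> 0\<close> by (intro mult_right_mono mult_left_mono) auto
  finally show ?thesis
    by simp
qed

lemma continuous_additive_real_eq_scaleR:
  fixes h :: "real \<Rightarrow> 'a::real_normed_vector"
  assumes cont: "continuous_on UNIV h" and add: "\<And>a b. h (a + b) = h a + h b"
  shows "h s = s *\<^sub>R h 1"
proof -
  have h0: "h 0 = 0"
    using add[of 0 0] by simp
  have neg: "h (- x) = - h x" for x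
    using add[of x "- x"] h0 by (simp add: eq_neg_iff_add_eq_0 add.commute)
  have of_nat_mult: "h (of_nat n * x) = of_nat n *\<^sub>R h x" for n x
    by (induction n) (auto simp: h0 distrib_right add scaleR_add_left)
  have of_int_mult: "h (of_int k * x) = of_int k *\<^sub>R h x" for k x
  proof (cases "k \<ge> 0")
    case True
    then show ?thesis
      using of_nat_mult[of "nat k" x] by simp
  next
    case False
    then have "h (of_int k * x) = h (- (of_nat (nat (- k)) * x))"
      by simp
    then show ?thesis
      using False by (simp only: neg of_nat_mult) simp
  qed
  have on_rats: "h q - q *\<^sub>R h 1 = 0" if "q \<in> \<rat>" for q
  proof -
    obtain a b :: int where q: "q = of_int a / of_int b" "b \<noteq> 0"
      using \<open>q \<in> \<rat>\<close> by (metis Rats_cases' less_irrefl)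
    have "of_int b *\<^sub>R h q = h (of_int b * q)"
      by (rule of_int_mult[symmetric])
    also have "of_int b * q = of_int a * 1"
      using q by simp
    also have "h (of_int a * 1) = (of_int b * q) *\<^sub>R h 1"
      using q by (simp only: of_int_mult) simp
    finally have "of_int b *\<^sub>R h q = of_int b *\<^sub>R (q *\<^sub>R h 1)"
      by simp
    then show ?thesis
      using q(2) by (subst (asm) scaleR_cancel_left) simp
  qed
  have "continuous_on (closure \<rat>) (\<lambda>x. h x - x *\<^sub>R h 1)"
    unfolding Rats_closure_real by (intro continuous_intros cont)
  then have "h s - s *\<^sub>R h 1 = 0"
    by (rule continuous_constant_on_closure) (simp_all only: on_rats Rats_closure_real UNIV_I)
  then show ?thesis
    by simp
qed

text \<open>A continuous logarithm \<open>g\<close> of \<open>f\<close> satisfies \<open>g(a + b) - g a - g b \<in> 2\<pi>i\<int>\<close>, so this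
  quantity is constant in \<open>b\<close>; hence \<open>g - g 0\<close> is additive and thus linear.\<close>
lemma continuous_character_real_eq_cis:
  fixes f :: "real \<Rightarrow> complex"
  assumes cont: "continuous_on UNIV f" and unit: "\<And>s. cmod (f s) = 1"
    and mult: "\<And>a b. f (a + b) = f a * f b"
  obtains c where "\<And>s. f s = cis (2 * pi * c * s)"
proof -
  have nz: "f x \<noteq> 0" for x
    using unit[of x] by auto
  obtain g where contg: "continuous_on UNIV g" and fg: "\<And>x. f x = exp (g x)"
    by (rule continuous_logarithm_on_contractible[OF cont convex_imp_contractible[OF convex_UNIV]])
      (use nz in auto)
  have defect_const: "g (a + b) - g a - g b = - g 0" for a b
  proof -
    let ?k = "\<lambda>b. g (a + b) - g a - g b"
    have exp_k: "exp (?k b) = 1" for b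
      using mult[of a b] nz[of a] nz[of b] by (simp add: exp_diff fg)
    have "?k constant_on UNIV"
    proof (rule continuous_discrete_range_constant)
      show "continuous_on UNIV ?k"
        by (intro continuous_intros continuous_on_compose2[OF contg] contg) auto
      show "\<exists>e>0. \<forall>y. y \<in> UNIV \<and> ?k y \<noteq> ?k x \<longrightarrow> e \<le> norm (?k y - ?k x)" for x
      proof (intro exI[of _ "2 * pi"] conjI allI impI)
        fix y
        assume "y \<in> UNIV \<and> ?k y \<noteq> ?k x"
        then have "?k y - ?k x \<noteq> 0"
          by (simp only: right_minus_eq) simp
        moreover have "exp (?k y - ?k x) = 1"
          unfolding exp_diff[of "?k y" "?k x"] exp_k by simp
        ultimately show "2 * pi \<le> norm (?k y - ?k x)"
          by (metis exp_eq_1_imp_norm_ge)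
      qed simp
    qed simp
    then obtain c where c: "\<And>b. ?k b = c"
      by (auto simp: constant_on_def)
    have "?k 0 = - g 0"
      by simp
    then show ?thesis
      using c by metis
  qed
  define h where "h x = g x - g 0" for x
  have "continuous_on UNIV h"
    unfolding h_def by (intro continuous_intros contg)
  moreover have "h (a + b) = h a + h b" for a b
    using defect_const[of a b] by (simp add: h_def algebra_simps)
  ultimately have h_lin: "h s = of_real s * h 1" for s
    using continuous_additive_real_eq_scaleR by (metis scaleR_conv_of_real)
  have "exp (g 0) = 1"
    using fg[of 0] mult[of 0 0] nz[of 0] by simp
  then have "f s = exp (h s)" for s
    by (simp add: fg h_def exp_diff)
  then have fh: "f s = exp (of_real s * h 1)" for s
    by (simp only: h_lin[of s])
  have "Re (h 1) = 0"
    using fh[of 1] unit[of 1] by simp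
  define r where "r = Im (h 1)"
  have "h 1 = \<i> * of_real r"
    using \<open>Re (h 1) = 0\<close> by (simp add: complex_eq_iff r_def)
  then have "f s = exp (\<i> * of_real (r * s))" for s
    using fh[of s] by (simp add: mult_ac)
  then have "f s = cis (2 * pi * (r / (2 * pi)) * s)" for s
    by (simp add: cis_conv_exp)
  then show ?thesis
    using that by blast
qed

lemma bounded_torus: "bounded (torus :: (complex^'n) set)"
proof -
  have "norm x \<le> sqrt (real CARD('n))" if "x \<in> torus" for x :: "complex^'n"
    using that by (simp add: norm_vec_def L2_set_def torus_def)
  then show ?thesis
    unfolding bounded_iff by blast
qed

lemma closed_subgroup_compact: "closed_subgroup H \<Longrightarrow> compact H"
  using bounded_subset[OF bounded_torus]
  by (auto simp: closed_subgroup_def compact_eq_bounded_closed)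

lemma texp_nth: "texp X $ k = cis (2 * pi * X $ k)"
  by (simp add: texp_def)

lemma texp_add: "texp (X + Y) = vmul (texp X) (texp Y)"
  by (simp add: vec_eq_iff vmul_def texp_nth cis_mult distrib_left)

lemma texp_in_torus: "texp X \<in> torus"
  by (simp add: torus_def texp_nth)

lemma one_parameter_subgroup_eq_texp:
  fixes \<gamma> :: "real \<Rightarrow> complex^'n"
  assumes cont: "continuous_on UNIV \<gamma>" and torus: "\<And>s. \<gamma> s \<in> torus"
    and hom: "\<And>a b. \<gamma> (a + b) = vmul (\<gamma> a) (\<gamma> b)"
  obtains X where "\<And>s. texp (s *\<^sub>R X) = \<gamma> s"
proof -
  have "\<exists>c. \<forall>s. \<gamma> s $ k = cis (2 * pi * c * s)" for k
  proof (rule continuous_character_real_eq_cis)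
    show "continuous_on UNIV (\<lambda>s. \<gamma> s $ k)"
      by (intro continuous_intros cont)
    show "cmod (\<gamma> s $ k) = 1" for s
      using torus[of s] by (simp add: torus_def)
    show "\<gamma> (a + b) $ k = \<gamma> a $ k * \<gamma> b $ k" for a b
      by (simp add: hom vmul_def)
  qed blast
  then obtain c where c: "\<And>k s. \<gamma> s $ k = cis (2 * pi * c k * s)"
    by metis
  have "texp (s *\<^sub>R (\<chi> k. c k)) = \<gamma> s" for s
    by (simp add: vec_eq_iff texp_nth c mult_ac)
  then show ?thesis
    using that by blast
qed

lemma eta_eqI:
  assumes "\<And>s. \<rho> (texp (s *\<^sub>R X)) $ j = cis (2 * pi * c * s)"
  shows "eta \<rho> j X = c"
  unfolding eta_def
proof (rule the_equality)
  show "\<forall>s. \<rho> (texp (s *\<^sub>R X)) $ j = cis (2 * pi * c * s)"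
    using assms by blast
  show "d = c" if "\<forall>s. \<rho> (texp (s *\<^sub>R X)) $ j = cis (2 * pi * d * s)" for d
    using that assms by (intro cis_frequency_unique) simp
qed

lemma texp_in_image_if_orthogonal:
  fixes \<rho> :: "complex^'n \<Rightarrow> complex^'m"
  assumes "exact_seq H \<rho> \<xi>" and "(\<chi> j. real (\<xi> j)) \<bullet> v = 0"
  shows "texp (s *\<^sub>R v) \<in> \<rho> ` H"
proof -
  have "(texp (s *\<^sub>R v) $ j) ^ \<xi> j = exp (\<i> * of_real (2 * pi * s) * of_real (real (\<xi> j) * v $ j))"
    for j
    by (simp add: texp_nth cis_conv_exp flip: exp_of_nat_mult) (simp add: mult_ac)
  then have "(\<Prod>j\<in>UNIV. (texp (s *\<^sub>R v) $ j) ^ \<xi> j)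
      = exp (\<i> * of_real (2 * pi * s) * of_real ((\<chi> j. real (\<xi> j)) \<bullet> v))"
    by (simp add: exp_sum inner_vec_def sum_distrib_left)
  then show ?thesis
    using assms texp_in_torus by (simp add: exact_seq_def)
qed

lemma exists_lie_alg_eta_eq:
  fixes \<rho> :: "complex^'n \<Rightarrow> complex^'m"
  assumes H: "closed_subgroup H" and \<rho>: "inj_hom H \<rho>" and exact: "exact_seq H \<rho> \<xi>"
    and orth: "(\<chi> j. real (\<xi> j)) \<bullet> v = 0"
  obtains X where "X \<in> lie_alg H" and "\<And>j. eta \<rho> j X = v $ j"
proof -
  have inj: "inj_on \<rho> H" and cont: "continuous_on H \<rho>"
    and hom: "\<And>a b. a \<in> H \<Longrightarrow> b \<in> H \<Longrightarrow> \<rho> (vmul a b) = vmul (\<rho> a) (\<rho> b)"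
    using \<rho> by (auto simp: inj_hom_def)
  have image: "texp (s *\<^sub>R v) \<in> \<rho> ` H" for s
    using texp_in_image_if_orthogonal[OF exact orth] .
  define \<gamma> where "\<gamma> s = inv_into H \<rho> (texp (s *\<^sub>R v))" for s
  have \<gamma>_in: "\<gamma> s \<in> H" and \<rho>_\<gamma>: "\<rho> (\<gamma> s) = texp (s *\<^sub>R v)" for s
    using image[of s] by (simp_all add: \<gamma>_def inv_into_into f_inv_into_f)
  have "continuous_on (\<rho> ` H) (inv_into H \<rho>)"
    using continuous_on_inv[OF cont closed_subgroup_compact[OF H]] inj by simp
  moreover have "continuous_on UNIV (\<lambda>s. texp (s *\<^sub>R v))"
    unfolding texp_def by (intro continuous_intros)
  ultimately have "continuous_on UNIV \<gamma>"
    unfolding \<gamma>_def by (rule continuous_on_compose2) (use image in blast)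
  moreover have "\<gamma> s \<in> torus" for s
    using \<gamma>_in H by (auto simp: closed_subgroup_def)
  moreover have "\<gamma> (a + b) = vmul (\<gamma> a) (\<gamma> b)" for a b
  proof -
    have "\<rho> (vmul (\<gamma> a) (\<gamma> b)) = \<rho> (\<gamma> (a + b))"
      by (simp add: hom \<gamma>_in \<rho>_\<gamma> scaleR_add_left texp_add)
    then show ?thesis
      using inj \<gamma>_in H by (auto simp: closed_subgroup_def inj_on_def)
  qed
  ultimately obtain X where X: "\<And>s. texp (s *\<^sub>R X) = \<gamma> s"
    by (metis one_parameter_subgroup_eq_texp)
  have "X \<in> lie_alg H"
    by (simp add: lie_alg_def X \<gamma>_in)
  moreover have "eta \<rho> j X = v $ j" for j
    by (rule eta_eqI) (simp add: X \<rho>_\<gamma> texp_nth mult_ac)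
  ultimately show ?thesis
    using that by blast
qed

lemma zero_level_eta_sum:
  assumes "(t, \<alpha>, z) \<in> zero_level H \<rho>" and "X \<in> lie_alg H"
  shows "(\<Sum>j\<in>UNIV. eta \<rho> j X * (cmod (z $ j))\<^sup>2) = 0"
proof -
  have "(\<lambda>X. if X \<in> lie_alg H then (1/2) * (\<Sum>j\<in>UNIV. eta \<rho> j X * (cmod (z $ j))\<^sup>2) else 0)
      = (\<lambda>X. 0)"
    using assms(1) by (simp add: zero_level_def moment_map_def)
  from fun_cong[OF this, of X] show ?thesis
    using assms(2) by simp
qed

lemma orthogonal_to_perp_imp_scaleR:
  fixes w a :: "real^'m"
  assumes "w $ i \<noteq> 0" and "\<And>v :: real^'m. w \<bullet> v = 0 \<Longrightarrow> v \<bullet> a = 0"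
  shows "a = (a $ i / w $ i) *\<^sub>R w"
proof -
  have "w $ i * a $ j = w $ j * a $ i" for j
  proof -
    define v :: "real^'m" where "v = w $ i *\<^sub>R axis j 1 - w $ j *\<^sub>R axis i 1"
    have "w \<bullet> v = 0"
      by (simp add: v_def inner_diff_right inner_axis)
    then have "v \<bullet> a = 0"
      by (rule assms(2))
    then show ?thesis
      by (simp add: v_def inner_diff_left inner_commute[of "axis _ _"] inner_axis)
  qed
  then show ?thesis
    using assms(1) by (simp add: vec_eq_iff field_simps)
qed

lemma exact_seq_exponent_nonzero:
  fixes \<rho> :: "complex^'n \<Rightarrow> complex^'m"
  assumes "exact_seq H \<rho> \<xi>"
  obtains j where "\<xi> j \<noteq> 0"
proof (rule ccontr)
  assume "\<not> thesis"
  with that have "\<And>j. \<xi> j = 0"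
    by blast
  moreover obtain l :: "complex^'m" where "(\<Prod>j\<in>UNIV. (l $ j) ^ \<xi> j) = -1"
    using assms unfolding exact_seq_def by (metis norm_minus_cancel norm_one)
  ultimately show False
    by simp
qed

text \<open>The convention \<open>0\<^sup>0 = 1\<close> is HOL's \<open>0 ^ 0 = 1\<close>; it keeps \<open>\<Prod>\<^sub>j \<xi>\<^sub>j\<^sup>\<xi>\<^sup>\<^sub>j\<close> positive,
  which matters because \<open>0 powr x = 0\<close>.\<close>
lemma sum_norm_sq_eq_defining_poly:
  fixes z :: "complex^'m" and \<xi> :: "'m \<Rightarrow> nat"
  assumes z: "\<And>j. (cmod (z $ j))\<^sup>2 = c * real (\<xi> j)" and "c \<ge> 0" and "poly_degree \<xi> > 0"
  shows "(\<Sum>j\<in>UNIV. (cmod (z $ j))\<^sup>2) =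
      real (poly_degree \<xi>) * (real (\<Prod>j\<in>UNIV. \<xi> j ^ \<xi> j)) powr (- 1 / real (poly_degree \<xi>))
        * (cmod (defining_poly \<xi> z)) powr (2 / real (poly_degree \<xi>))"
proof -
  define N where "N = real (poly_degree \<xi>)"
  define Q where "Q = real (\<Prod>j\<in>UNIV. \<xi> j ^ \<xi> j)"
  have "N > 0"
    using assms(3) by (simp add: N_def)
  have "real (\<xi> j) ^ \<xi> j > 0" for j
    by (cases "\<xi> j") auto
  then have "Q > 0"
    unfolding Q_def of_nat_prod of_nat_power by (intro prod_pos)
  have sum: "(\<Sum>j\<in>UNIV. (cmod (z $ j))\<^sup>2) = c * N"
    by (simp add: z N_def poly_degree_def sum_distrib_left)
  have "cmod (defining_poly \<xi> z) = (\<Prod>j\<in>UNIV. cmod (z $ j) ^ \<xi> j)"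
    by (simp add: defining_poly_def norm_power flip: prod_norm)
  then have "(cmod (defining_poly \<xi> z))\<^sup>2 = (\<Prod>j\<in>UNIV. ((cmod (z $ j))\<^sup>2) ^ \<xi> j)"
    by (simp add: prod_power_distrib mult.commute flip: power_mult)
  also have "\<dots> = c ^ poly_degree \<xi> * Q"
    by (simp add: z power_mult_distrib prod.distrib Q_def poly_degree_def power_sum)
  also have "c ^ poly_degree \<xi> = c powr N"
    using \<open>c \<ge> 0\<close> assms(3) by (cases "c = 0") (simp_all add: N_def powr_realpow)
  finally have norm_sq: "(cmod (defining_poly \<xi> z))\<^sup>2 = c powr N * Q" .
  have "cmod (defining_poly \<xi> z) powr (2 / N) = (cmod (defining_poly \<xi> z) powr 2) powr (1 / N)"
    by (simp only: powr_powr) simp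
  also have "\<dots> = (c powr N * Q) powr (1 / N)"
    by (simp add: powr_numeral norm_sq)
  also have "\<dots> = c * Q powr (1 / N)"
    using \<open>c \<ge> 0\<close> \<open>N > 0\<close> \<open>Q > 0\<close> by (simp add: powr_mult powr_powr)
  finally have norm_powr: "cmod (defining_poly \<xi> z) powr (2 / N) = c * Q powr (1 / N)" .
  have "Q powr (- 1 / N) * Q powr (1 / N) = 1"
    using \<open>Q > 0\<close> by (simp flip: powr_add)
  then have "N * Q powr (- 1 / N) * (c * Q powr (1 / N)) = c * N"
    by (metis mult.commute mult.left_commute mult_1_right)
  then show ?thesis
    unfolding sum N_def[symmetric] Q_def[symmetric] norm_powr by argo
qed

lemma zero_level_norm_sq_proportional:
  fixes \<rho> :: "complex^'n \<Rightarrow> complex^'m"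
  assumes "closed_subgroup H" and "inj_hom H \<rho>" and "exact_seq H \<rho> \<xi>"
    and zero: "(t, \<alpha>, z) \<in> zero_level H \<rho>" and "\<xi> i \<noteq> 0"
  obtains c where "c \<ge> 0" and "\<And>j. (cmod (z $ j))\<^sup>2 = c * real (\<xi> j)"
proof -
  define w :: "real^'m" where "w = (\<chi> j. real (\<xi> j))"
  define a :: "real^'m" where "a = (\<chi> j. (cmod (z $ j))\<^sup>2)"
  have perp: "v \<bullet> a = 0" if orth: "w \<bullet> v = 0" for v
  proof -
    obtain X where X: "X \<in> lie_alg H" and eta: "\<And>j. eta \<rho> j X = v $ j"
      using exists_lie_alg_eta_eq[OF assms(1-3) orth[unfolded w_def]] by blast
    show ?thesis
      using zero_level_eta_sum[OF zero X] by (simp add: inner_vec_def a_def eta)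
  qed
  define c where "c = a $ i / w $ i"
  have "w $ i \<noteq> 0"
    using \<open>\<xi> i \<noteq> 0\<close> by (simp add: w_def)
  then have "a = c *\<^sub>R w"
    unfolding c_def using perp by (rule orthogonal_to_perp_imp_scaleR)
  then have "(cmod (z $ j))\<^sup>2 = c * real (\<xi> j)" for j
    by (simp add: vec_eq_iff a_def w_def)
  moreover have "c \<ge> 0"
    by (simp add: c_def a_def w_def)
  ultimately show ?thesis
    using that by blast
qed

theorem lemma2p7:
  fixes H :: "(complex^'n) set" and \<rho> :: "complex^'n \<Rightarrow> complex^'m" and \<xi> :: "'m \<Rightarrow> nat"
  assumes "closed_subgroup H"
    and "CARD('m) = dim (lie_alg H) + 1"
    and "inj_hom H \<rho>"
    and "tall H \<rho>"
    and "exact_seq H \<rho> \<xi>"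
  shows "\<forall>(t, \<alpha>, z) \<in> zero_level H \<rho>.
    (\<Sum>j\<in>UNIV. (cmod (z$j))\<^sup>2) =
      real (poly_degree \<xi>) * (real (\<Prod>j\<in>UNIV. \<xi> j ^ \<xi> j)) powr (- 1 / real (poly_degree \<xi>))
        * (cmod (defining_poly \<xi> z)) powr (2 / real (poly_degree \<xi>))"
proof (clarify)
  fix t \<alpha> and z :: "complex^'m"
  assume zero: "(t, \<alpha>, z) \<in> zero_level H \<rho>"
  obtain i where "\<xi> i \<noteq> 0"
    using exact_seq_exponent_nonzero[OF assms(5)] .
  then have "poly_degree \<xi> > 0"
    by (simp add: poly_degree_def sum_pos2)
  obtain c where "c \<ge> 0" and "\<And>j. (cmod (z $ j))\<^sup>2 = c * real (\<xi> j)"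
    using zero_level_norm_sq_proportional[OF assms(1,3,5) zero \<open>\<xi> i \<noteq> 0\<close>] by blast
  then show "(\<Sum>j\<in>UNIV. (cmod (z$j))\<^sup>2) =
      real (poly_degree \<xi>) * (real (\<Prod>j\<in>UNIV. \<xi> j ^ \<xi> j)) powr (- 1 / real (poly_degree \<xi>))
        * (cmod (defining_poly \<xi> z)) powr (2 / real (poly_degree \<xi>))"
    using sum_norm_sq_eq_defining_poly \<open>poly_degree \<xi> > 0\<close> by blast
qed

end
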